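(* Let $n\ge 2$, let $X\subset\mathbb{R}^n$ be finite with the Euclidean metric $d$, let $\epsilon>0$ and let $A\subset X$. Let $x\in X\setminus A$ and $r\in\mathbb{N}\cup\{0\}$. Then for any $p\in A\setminus(\partial A)^{\mathfrak{n}+r}_A$ there exists $a\in(\partial A)_A$ such that \[ d(p,x)>d(a,x)+r\frac{\epsilon}{2\sqrt n}. \] In particular, for any $x\in X\setminus A$ and $p\in A$, there exists $a\in(\partial A)^{\mathfrak{n}}_A$ such that $d(a,x)\le d(p,x)$.
   Context: $\mathcal{Q}=\mathcal{Q}(\epsilon)$ is the collection of closed cubes $\{x\in\mathbb{R}^n: j_i\frac{\epsilon}{2\sqrt n}\le x_i\le (j_i+1)\frac{\epsilon}{2\sqrt n},\ i=1,\dots,n\}$, $j\in\mathbb{Z}^n$. For a cube $S\in\mathcal{Q}$ and integer $m\ge0$, $S^m=\{x\in\mathbb{R}^n:\max_i|x_i-s_i|\le m\frac{\epsilon}{2\sqrt n}\text{ for some }s\in S\}$. For $B\subset\mathbb{R}^n$, $\mathcal{I}(B)=\{S\in\mathcal{Q}: S\cap B\ne\emptyset\}$, and for $Y\subset\mathbb{R}^n$, $Y_B=Y\cap B$. A cube $S\in\mathcal{I}(A)$ is an interior cube of $A$ if $S^1\cap X\subset A$ and every cube $T\in\mathcal{Q}$ with $T\subset S^1$ lies in $\mathcal{I}(A)$; otherwise $S\in\mathcal{I}(A)$ is a boundary cube of $A$. The boundary $\partial A$ is the union of all boundary cubes of $A$. For $Y\subset\mathbb{R}^n$ and integer $N\ge0$,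 the $N$-extension is $Y^N=\bigcup_{S\in\mathcal{I}(Y)}S^N$. Thus $(\partial A)^N_A=(\partial A)^N\cap A$ and $(\partial A)_A=\partial A\cap A$. $\mathfrak{n}$ is the smallest integer with $\mathfrak{n}\ge\sqrt n-1$. *)

theory Defs
  imports "HOL-Analysis.Analysis"
begin

definition gcube :: "real \<Rightarrow> int ^ 'n \<Rightarrow> (real ^ 'n::finite) set" where
  "gcube eps j = {x. \<forall>i. of_int (j $ i) * (eps / (2 * sqrt (real CARD('n)))) \<le> x $ i \<and>
                        x $ i \<le> (of_int (j $ i) + 1) * (eps / (2 * sqrt (real CARD('n))))}"

definition gcubes :: "real \<Rightarrow> (real ^ 'n::finite) set set" where
  "gcubes eps = range (gcube eps)"

definition cext :: "real \<Rightarrow> nat \<Rightarrow> (real ^ 'n::finite) set \<Rightarrow> (real ^ 'n) set" where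
  "cext eps m S = {x. \<exists>s\<in>S. \<forall>i. \<bar>x $ i - s $ i\<bar> \<le> real m * (eps / (2 * sqrt (real CARD('n))))}"

definition Icubes :: "real \<Rightarrow> (real ^ 'n::finite) set \<Rightarrow> (real ^ 'n) set set" where
  "Icubes eps B = {S \<in> gcubes eps. S \<inter> B \<noteq> {}}"

definition interior_cube ::
  "real \<Rightarrow> (real ^ 'n::finite) set \<Rightarrow> (real ^ 'n) set \<Rightarrow> (real ^ 'n) set \<Rightarrow> bool" where
  "interior_cube eps X A S \<longleftrightarrow> S \<in> Icubes eps A \<and> cext eps 1 S \<inter> X \<subseteq> A \<and>
     (\<forall>T\<in>gcubes eps. T \<subseteq> cext eps 1 S \<longrightarrow> T \<in> Icubes eps A)"

definition boundary_cube ::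
  "real \<Rightarrow> (real ^ 'n::finite) set \<Rightarrow> (real ^ 'n) set \<Rightarrow> (real ^ 'n) set \<Rightarrow> bool" where
  "boundary_cube eps X A S \<longleftrightarrow> S \<in> Icubes eps A \<and> \<not> interior_cube eps X A S"

definition cboundary :: "real \<Rightarrow> (real ^ 'n::finite) set \<Rightarrow> (real ^ 'n) set \<Rightarrow> (real ^ 'n) set" where
  "cboundary eps X A = \<Union> {S. boundary_cube eps X A S}"

definition next_set :: "real \<Rightarrow> nat \<Rightarrow> (real ^ 'n::finite) set \<Rightarrow> (real ^ 'n) set" where
  "next_set eps N Y = (\<Union>S\<in>Icubes eps Y. cext eps N S)"

text \<open>The smallest integer \<ge> sqrt n - 1 (nonnegative since n \<ge> 1).\<close>
definition frak_n :: "nat \<Rightarrow> nat" where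
  "frak_n n = nat \<lceil>sqrt (real n) - 1\<rceil>"

end

theory Submission
  imports Defs
begin

text \<open>
  Walk from \<open>p \<in> A\<close> to \<open>x \<in> X - A\<close> along the segment in steps of sup-length at most one
  side \<open>\<delta> = \<epsilon>/(2\<surd>n)\<close>. Every step stays within the 1-neighbourhood of the cube just
  visited, so if all cubes met were interior, \<open>x\<close> would lie in \<open>A\<close>; hence the segment meets a
  boundary cube \<open>B\<close> in some point \<open>q\<close>. Since \<open>p\<close> lies outside \<open>(\<partial>A)\<^sup>N\<close>, its sup-distance from
  every point of the neighbouring cubes of \<open>B\<close> exceeds \<open>N\<delta>\<close>, so \<open>|p - q| > (N + 1)\<delta>\<close>.
  Any \<open>a \<in> B \<inter> A\<close> has \<open>|a - q| \<le> \<surd>n \<delta>\<close>, and \<open>|p - x| = |p - q| + |q - x|\<close>; with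
  \<open>N = \<nn> + r \<ge> \<surd>n - 1 + r\<close> this gives \<open>|a - x| + r\<delta> < |p - x|\<close>.
\<close>

definition grid_cube :: "real \<Rightarrow> int ^ 'n \<Rightarrow> (real ^ 'n::finite) set" where
  "grid_cube h j = {x. \<forall>i. of_int (j $ i) * h \<le> x $ i \<and> x $ i \<le> (of_int (j $ i) + 1) * h}"

lemma gcube_eq_grid_cube:
  "(gcube eps :: int ^ 'n \<Rightarrow> _) = grid_cube (eps / (2 * sqrt (real CARD('n::finite))))"
  by (simp add: fun_eq_iff gcube_def grid_cube_def)

lemma infnorm_le_iff_cart: "infnorm (x :: real ^ 'n::finite) \<le> c \<longleftrightarrow> (\<forall>i. \<bar>x $ i\<bar> \<le> c)"
  by (auto simp: infnorm_cart intro: order_trans[OF component_le_infnorm_cart] cSup_least)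

lemma cext_eq_infnorm:
  fixes S :: "(real ^ 'n::finite) set"
  shows "cext eps m S = {x. \<exists>s\<in>S. infnorm (x - s) \<le> real m * (eps / (2 * sqrt (real CARD('n))))}"
  by (simp add: cext_def infnorm_le_iff_cart)

lemma grid_cube_floor:
  fixes x :: "real ^ 'n::finite"
  assumes "h > 0"
  shows "x \<in> grid_cube h (\<chi> i. \<lfloor>x $ i / h\<rfloor>)"
proof -
  have "of_int \<lfloor>x $ i / h\<rfloor> * h \<le> x $ i" "x $ i \<le> (of_int \<lfloor>x $ i / h\<rfloor> + 1) * h" for i
    using assms by (simp_all add: pos_le_divide_eq[symmetric] pos_divide_le_eq[symmetric])
  then show ?thesis by (simp add: grid_cube_def)
qed

lemma nearby_point_in_adjacent_grid_cube:
  fixes q s :: "real ^ 'n::finite"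
  assumes "q \<in> grid_cube h j" and "infnorm (s - q) \<le> h"
  obtains j' where "s \<in> grid_cube h j'" and "\<forall>i. \<bar>j' $ i - j $ i\<bar> \<le> 1"
proof
  define j' where "j' = (\<chi> i. if s $ i < of_int (j $ i) * h then j $ i - 1
       else if s $ i > (of_int (j $ i) + 1) * h then j $ i + 1 else j $ i)"
  have "of_int (j' $ i) * h \<le> s $ i \<and> s $ i \<le> (of_int (j' $ i) + 1) * h" for i
  proof -
    have "of_int (j $ i) * h \<le> q $ i" "q $ i \<le> (of_int (j $ i) + 1) * h"
      using assms(1) by (auto simp: grid_cube_def)
    moreover have "\<bar>s $ i - q $ i\<bar> \<le> h"
      using assms(2) by (auto simp: infnorm_le_iff_cart)
    ultimately show ?thesis by (auto simp: j'_def algebra_simps)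
  qed
  then show "s \<in> grid_cube h j'" by (simp add: grid_cube_def)
  show "\<forall>i. \<bar>j' $ i - j $ i\<bar> \<le> 1" by (simp add: j'_def)
qed

lemma adjacent_grid_cubes_meet:
  fixes j j' :: "int ^ 'n::finite"
  assumes "h \<ge> 0" and "\<forall>i. \<bar>j' $ i - j $ i\<bar> \<le> 1"
  shows "grid_cube h j' \<inter> grid_cube h j \<noteq> {}"
proof -
  define w where "w = (\<chi> i. max (of_int (j $ i)) (of_int (j' $ i)) * h)"
  have "of_int (j' $ i) \<le> of_int (j $ i) + (1::real)" "of_int (j $ i) \<le> of_int (j' $ i) + (1::real)" for i
    using assms(2)[rule_format, of i] by linarith+
  then have "w \<in> grid_cube h j'" "w \<in> grid_cube h j"
    using assms(1) by (auto simp: grid_cube_def w_def max_def intro: mult_right_mono)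
  then show ?thesis by blast
qed

lemma adjacent_grid_cube_close:
  fixes j j' :: "int ^ 'n::finite"
  assumes "h \<ge> 0" and "\<forall>i. \<bar>j' $ i - j $ i\<bar> \<le> 1" and "y \<in> grid_cube h j'"
  shows "\<exists>s \<in> grid_cube h j. infnorm (y - s) \<le> h"
proof
  define s where "s = (\<chi> i. max (of_int (j $ i) * h) (min (y $ i) ((of_int (j $ i) + 1) * h)))"
  show "s \<in> grid_cube h j"
    using assms(1) by (auto simp: grid_cube_def s_def algebra_simps)
  have "\<bar>y $ i - s $ i\<bar> \<le> h" for i
  proof -
    have "of_int (j' $ i) \<le> of_int (j $ i) + (1::real)" "of_int (j $ i) \<le> of_int (j' $ i) + (1::real)"
      using assms(2)[rule_format, of i] by linarith+
    then have "of_int (j' $ i) * h \<le> (of_int (j $ i) + 1) * h" "of_int (j $ i) * h \<le> (of_int (j' $ i) + 1) * h"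
      using assms(1) by (auto intro: mult_right_mono)
    moreover have "of_int (j' $ i) * h \<le> y $ i" "y $ i \<le> (of_int (j' $ i) + 1) * h"
      using assms(3) by (auto simp: grid_cube_def)
    ultimately show ?thesis using assms(1) by (auto simp: s_def algebra_simps)
  qed
  then show "infnorm (y - s) \<le> h" by (simp add: infnorm_le_iff_cart)
qed

lemma grid_cube_infnorm_diam:
  assumes "a \<in> grid_cube h j" and "b \<in> grid_cube h j"
  shows "infnorm (a - b) \<le> h"
proof -
  have "\<bar>a $ i - b $ i\<bar> \<le> h" for i
  proof -
    have "of_int (j $ i) * h \<le> a $ i" "a $ i \<le> (of_int (j $ i) + 1) * h"
      "of_int (j $ i) * h \<le> b $ i" "b $ i \<le> (of_int (j $ i) + 1) * h"
      using assms by (auto simp: grid_cube_def)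
    then show ?thesis by (auto simp: algebra_simps)
  qed
  then show ?thesis by (simp add: infnorm_le_iff_cart)
qed

lemma subset_cext:
  fixes S :: "(real ^ 'n::finite) set"
  assumes "eps \<ge> 0"
  shows "S \<subseteq> cext eps m S"
  using assms by (auto simp: cext_def intro!: bexI)

lemma Icubes_cover:
  fixes Y :: "(real ^ 'n::finite) set"
  assumes "eps > 0" and "y \<in> Y"
  shows "\<exists>S \<in> Icubes eps Y. y \<in> S"
proof -
  let ?h = "eps / (2 * sqrt (real CARD('n)))"
  have "y \<in> gcube eps (\<chi> i. \<lfloor>y $ i / ?h\<rfloor>)"
    using grid_cube_floor[of ?h y] assms(1) by (simp add: gcube_eq_grid_cube)
  then show ?thesis
    using assms(2) by (auto simp: Icubes_def gcubes_def)
qed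

lemma subset_next_set:
  fixes Y :: "(real ^ 'n::finite) set"
  assumes "eps > 0"
  shows "Y \<subseteq> next_set eps N Y"
proof
  fix y assume "y \<in> Y"
  then obtain S where "S \<in> Icubes eps Y" "y \<in> S"
    using Icubes_cover assms by blast
  moreover have "y \<in> cext eps N S"
    using \<open>y \<in> S\<close> subset_cext[where eps = eps and S = S and m = N] assms by auto
  ultimately show "y \<in> next_set eps N Y"
    by (auto simp: next_set_def)
qed

lemma gcube_containing_nearby_point:
  fixes S :: "(real ^ 'n::finite) set"
  assumes "eps > 0" and "S \<in> gcubes eps" and "q \<in> S"
    and "infnorm (s - q) \<le> eps / (2 * sqrt (real CARD('n)))"
  obtains T where "T \<in> gcubes eps" and "s \<in> T" and "T \<inter> S \<noteq> {}" and "T \<subseteq> cext eps 1 S"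
proof -
  let ?h = "eps / (2 * sqrt (real CARD('n)))"
  have h: "?h \<ge> 0" using assms(1) by simp
  obtain j where S: "S = grid_cube ?h j"
    using assms(2) by (auto simp: gcubes_def gcube_eq_grid_cube)
  obtain j' where s: "s \<in> grid_cube ?h j'" and j': "\<forall>i. \<bar>j' $ i - j $ i\<bar> \<le> 1"
    using nearby_point_in_adjacent_grid_cube assms(3,4) S by blast
  show thesis
  proof
    show "grid_cube ?h j' \<in> gcubes eps"
      by (simp add: gcubes_def gcube_eq_grid_cube)
    show "s \<in> grid_cube ?h j'" by (fact s)
    show "grid_cube ?h j' \<inter> S \<noteq> {}"
      using adjacent_grid_cubes_meet[OF h j'] S by simp
    show "grid_cube ?h j' \<subseteq> cext eps 1 S"
      using adjacent_grid_cube_close[OF h j'] S by (auto simp: cext_eq_infnorm)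
  qed
qed

lemma interior_cube_nearby_point_in_Icubes:
  fixes S :: "(real ^ 'n::finite) set"
  assumes "eps > 0" and "interior_cube eps X A S" and "q \<in> S"
    and "infnorm (s - q) \<le> eps / (2 * sqrt (real CARD('n)))"
  shows "\<exists>T \<in> Icubes eps A. s \<in> T"
proof -
  have "S \<in> gcubes eps"
    using assms(2) by (simp add: interior_cube_def Icubes_def)
  then obtain T where "T \<in> gcubes eps" "s \<in> T" "T \<subseteq> cext eps 1 S"
    using gcube_containing_nearby_point assms(1,3,4) by metis
  then show ?thesis
    using assms(2) by (auto simp: interior_cube_def)
qed

lemma segment_meets_boundary_cube:
  fixes p x :: "real ^ 'n::finite"
  assumes "eps > 0" and "x \<in> X" and "x \<notin> A" and "p \<in> A"
  shows "\<exists>q \<in> closed_segment p x. \<exists>B. boundary_cube eps X A B \<and> q \<in> B"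
proof -
  let ?h = "eps / (2 * sqrt (real CARD('n)))"
  have h: "?h > 0" using assms(1) by simp
  obtain m :: nat where m: "dist p x / ?h < real m"
    using reals_Archimedean2 by blast
  moreover have "dist p x / ?h > 0" using assms(1,3,4) by (intro divide_pos_pos) auto
  ultimately have "m > 0" by simp
  define q where "q k = p + (real k / real m) *\<^sub>R (x - p)" for k
  have q_segment: "q k \<in> closed_segment p x" if "k \<le> m" for k
    using that \<open>m > 0\<close> unfolding in_segment q_def
    by (intro exI[of _ "real k / real m"]) (simp add: algebra_simps)
  have q_step: "infnorm (q (Suc k) - q k) \<le> ?h" for k
  proof -
    have "q (Suc k) - q k = (1 / real m) *\<^sub>R (x - p)"
      by (simp add: q_def add_divide_distrib scaleR_add_left)
    then have "infnorm (q (Suc k) - q k) = infnorm (x - p) / real m"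
      by (simp add: infnorm_mul)
    also have "\<dots> \<le> dist p x / real m"
      using infnorm_le_norm[of "x - p"] by (simp add: divide_right_mono dist_norm norm_minus_commute)
    also have "\<dots> \<le> ?h"
      using m \<open>m > 0\<close> h by (simp add: field_simps)
    finally show ?thesis .
  qed
  show ?thesis
  proof (rule ccontr)
    assume "\<not> ?thesis"
    then have interior: "interior_cube eps X A S" if "S \<in> Icubes eps A" "q k \<in> S" "k \<le> m" for S k
      using that q_segment by (auto simp: boundary_cube_def)
    have "\<exists>S. interior_cube eps X A S \<and> q k \<in> S" if "k \<le> m" for k
      using that
    proof (induction k)
      case 0
      then show ?case
        using Icubes_cover[OF assms(1,4)] interior[of _ 0] by (auto simp: q_def)
    next
      case (Suc k)
      then obtain S where "interior_cube eps X A S" "q k \<in> S" by auto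
      then obtain T where "T \<in> Icubes eps A" "q (Suc k) \<in> T"
        using interior_cube_nearby_point_in_Icubes assms(1) q_step by blast
      then show ?case
        using interior Suc.prems by blast
    qed
    moreover have "q m = x" using \<open>m > 0\<close> by (simp add: q_def)
    ultimately obtain S where "interior_cube eps X A S" "x \<in> S" by auto
    then show False
      using assms(1-3) subset_cext[where eps = eps and S = S and m = 1] unfolding interior_cube_def by auto
  qed
qed

lemma infnorm_far_from_boundary_cube:
  fixes p q :: "real ^ 'n::finite"
  assumes "eps > 0" and "p \<notin> next_set eps N (cboundary eps X A)"
    and "boundary_cube eps X A B" and "q \<in> B"
  shows "infnorm (p - q) > (real N + 1) * (eps / (2 * sqrt (real CARD('n))))"
proof -
  define h where "h = eps / (2 * sqrt (real CARD('n)))"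
  have h: "h > 0" using assms(1) by (simp add: h_def)
  have "infnorm (p - q) > (real N + 1) * h"
  proof (rule ccontr)
    assume "\<not> ?thesis"
    then have pq: "\<bar>p $ i - q $ i\<bar> \<le> (real N + 1) * h" for i
      using component_le_infnorm_cart[of "p - q" i] by simp
    \<comment> \<open>move from \<open>q\<close> towards \<open>p\<close> by at most \<open>h\<close> per coordinate: a cube through \<open>s\<close> meets \<open>B\<close>\<close>
    define s where "s = (\<chi> i. q $ i + max (- h) (min h (p $ i - q $ i)))"
    have "infnorm (s - q) \<le> h"
      using h by (auto simp: infnorm_le_iff_cart s_def abs_le_iff max_def min_def)
    moreover have "B \<in> gcubes eps"
      using assms(3) by (simp add: boundary_cube_def Icubes_def)
    ultimately obtain T where T: "T \<in> gcubes eps" "s \<in> T" "T \<inter> B \<noteq> {}"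
      using gcube_containing_nearby_point assms(1,4) unfolding h_def by metis
    have "B \<subseteq> cboundary eps X A"
      using assms(3) by (auto simp: cboundary_def)
    then have "T \<in> Icubes eps (cboundary eps X A)"
      using T by (auto simp: Icubes_def)
    moreover have "infnorm (p - s) \<le> real N * h"
      unfolding infnorm_le_iff_cart
    proof
      fix i
      show "\<bar>(p - s) $ i\<bar> \<le> real N * h"
        using pq[of i] h mult_nonneg_nonneg[of "real N" h]
        by (auto simp: s_def algebra_simps abs_le_iff max_def min_def)
    qed
    ultimately have "p \<in> next_set eps N (cboundary eps X A)"
      using T(2) by (auto simp: next_set_def cext_eq_infnorm h_def)
    then show False using assms(2) by contradiction
  qed
  then show ?thesis by (simp add: h_def)
qed

lemma sqrt_le_frak_n: "sqrt (real n) \<le> real (frak_n n) + 1"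
  unfolding frak_n_def by linarith

lemma boundary_point_closer_by:
  fixes X A :: "(real ^ 'n::finite) set"
  assumes "eps > 0" and "x \<in> X" and "x \<notin> A" and "p \<in> A"
    and "p \<notin> next_set eps (frak_n CARD('n) + r) (cboundary eps X A)"
  shows "\<exists>a \<in> cboundary eps X A \<inter> A. dist a x + real r * (eps / (2 * sqrt (real CARD('n)))) < dist p x"
proof -
  define h where "h = eps / (2 * sqrt (real CARD('n)))"
  have h: "h > 0" using assms(1) by (simp add: h_def)
  obtain q B where q: "q \<in> closed_segment p x" and B: "boundary_cube eps X A B" "q \<in> B"
    using segment_meets_boundary_cube assms(1-4) by blast
  obtain a j where a: "a \<in> B" "a \<in> A" and j: "B = grid_cube h j"
    using B(1) by (auto simp: boundary_cube_def Icubes_def gcubes_def gcube_eq_grid_cube h_def)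
  have "a \<in> cboundary eps X A"
    using a(1) B(1) by (auto simp: cboundary_def)
  moreover have "dist a q \<le> sqrt (real CARD('n)) * h"
  proof -
    have "dist a q \<le> sqrt (real CARD('n)) * infnorm (a - q)"
      using norm_le_infnorm[of "a - q"] by (simp add: dist_norm)
    also have "\<dots> \<le> sqrt (real CARD('n)) * h"
      using grid_cube_infnorm_diam[of a h j q] a(1) B(2) j by (simp add: mult_left_mono)
    finally show ?thesis .
  qed
  moreover have "(sqrt (real CARD('n)) + real r) * h < dist p q"
  proof -
    have "(sqrt (real CARD('n)) + real r) * h \<le> (real (frak_n CARD('n) + r) + 1) * h"
      using sqrt_le_frak_n[of "CARD('n)"] h by (intro mult_right_mono) auto
    also have "\<dots> < infnorm (p - q)"
      using infnorm_far_from_boundary_cube[OF assms(1,5) B] by (simp add: h_def)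
    also have "\<dots> \<le> dist p q"
      by (simp add: dist_norm infnorm_le_norm)
    finally show ?thesis .
  qed
  moreover have "dist p x = dist p q + dist q x"
    using q between[of p x q] between_mem_segment[of p x q] by simp
  moreover have "dist a x \<le> dist a q + dist q x"
    by (rule dist_triangle)
  ultimately show ?thesis
    using a(2) unfolding h_def[symmetric] by (intro bexI[of _ a]) (auto simp: algebra_simps)
qed

theorem proposition4p2:
  fixes X A :: "(real ^ 'n::finite) set" and eps :: real
  assumes "CARD('n) \<ge> 2"
    and "finite X"
    and "eps > 0"
    and "A \<subseteq> X"
  shows "(\<forall>x \<in> X - A. \<forall>r::nat.
            \<forall>p \<in> A - (next_set eps (frak_n CARD('n) + r) (cboundary eps X A) \<inter> A).
              \<exists>a \<in> cboundary eps X A \<inter> A.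
                dist p x > dist a x + real r * (eps / (2 * sqrt (real CARD('n)))))
       \<and> (\<forall>x \<in> X - A. \<forall>p \<in> A.
            \<exists>a \<in> next_set eps (frak_n CARD('n)) (cboundary eps X A) \<inter> A.
              dist a x \<le> dist p x)"
proof (intro conjI ballI allI)
  fix x r p
  assume "x \<in> X - A" and "p \<in> A - (next_set eps (frak_n CARD('n) + r) (cboundary eps X A) \<inter> A)"
  then show "\<exists>a \<in> cboundary eps X A \<inter> A.
               dist p x > dist a x + real r * (eps / (2 * sqrt (real CARD('n))))"
    using boundary_point_closer_by[OF assms(3)] by blast
next
  fix x p
  assume x: "x \<in> X - A" and p: "p \<in> A"
  show "\<exists>a \<in> next_set eps (frak_n CARD('n)) (cboundary eps X A) \<inter> A. dist a x \<le> dist p x"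
  proof (cases "p \<in> next_set eps (frak_n CARD('n)) (cboundary eps X A)")
    case True
    then show ?thesis using p by auto
  next
    case False
    then obtain a where "a \<in> cboundary eps X A \<inter> A" "dist a x < dist p x"
      using boundary_point_closer_by[OF assms(3), of x X A p 0] x p by auto
    then show ?thesis
      using subset_next_set[OF assms(3)] by (intro bexI[of _ a]) auto
  qed
qed

end
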